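(* Let $c\ge 1$ be an integer and $\lambda_1,\lambda_2,\mu_1,\mu_2>0$. Let $X$ be the continuous-time Markov chain on $\mathbb{N}_0^2$ described in the context, started at $X(0)=(0,0)$, and let $\pi_x(\alpha)$, $x\in\mathbb{N}_0^2$, $\mathrm{Re}\,\alpha>0$, be the Laplace transforms of its transition functions. Fix $\alpha$ with $\mathrm{Re}\,\alpha>0$ and define numbers $\{v_{i,j}\}_{i\ge j\ge 0}$ recursively by $v_{0,0}=\pi_{(0,c-1)}(\alpha)$ and, for $i\ge 0$, $$v_{i+1,0}=\pi_{(i+1,c-1)}(\alpha),\qquad v_{i+1,j}=R_1\Bigl(v_{i,j-1}+R_2\sum_{k=j}^{i}v_{i,k}\Bigr),\quad 1\le j\le i+1.$$ Then for all $i\ge 0$ and $j\ge 1$, $$\pi_{(i,c-1+j)}(\alpha)=\sum_{k=0}^{i}v_{i,k}\,(1-R_2)^k\binom{j-1+k}{k}r_2^{\,j}.$$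
   Context: The Markov chain $X=\{(X_1(t),X_2(t))\}_{t\ge0}$ on $\mathbb{N}_0^2$ has as its only nonzero off-diagonal transition rates: $q((i,j),(i+1,j))=\lambda_1$ ($i,j\ge0$); $q((i,j),(i,j+1))=\lambda_2$ ($i,j\ge0$); $q((i,j),(i-1,j))=\max(\min(i,c-j),0)\mu_1$ ($i\ge1$, $j\ge0$); $q((i,j),(i,j-1))=\min(c,j)\mu_2$ ($i\ge0$, $j\ge1$). (It models an $M/M/c$ queue with two classes, class 2 having preemptive-resume priority over class 1; $X_n(t)$ is the number of class-$n$ customers.) For $x\in\mathbb{N}_0^2$, $p_x(t)=P(X(t)=x\mid X(0)=(0,0))$ and $\pi_x(\alpha)=\int_0^\infty e^{-\alpha t}p_x(t)\,dt$ for $\mathrm{Re}\,\alpha>0$. For $\lambda,\mu>0$, $\phi_{\lambda,\mu}(s)=E[e^{-sB}]=\frac{\lambda+\mu+s-\sqrt{(\lambda+\mu+s)^2-4\lambda\mu}}{2\lambda}$ is the Laplace–Stieltjes transform of the busy period $B$ of an $M/M/1$ queue with arrival rate $\lambda$ and service rate $\mu$ started by one customer. Set $\rho_2=\lambda_2/(c\mu_2)$, $\phi_2=\phi_{\lambda_2,c\mu_2}(\lambda_1+\alpha)$, $r_2=\rho_2\phi_2$, $\Omega_2=\frac{\rho_2\phi_2}{\lambda_2(1-\rho_2\phi_2^2)}$, $R_1=\frac{\lambda_1\Omega_2}{1-r_2\phi_2}$, $R_2=r_2\phi_2$. Empty sums are zero. *)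

theory Defs
  imports "HOL-Analysis.Analysis"
begin

text \<open>Transition rates of the two-class preemptive-priority M/M/c chain on N0^2.
  Parameters: l1 l2 (arrival rates), m1 m2 (service rates), c (servers).
  Note min i (c - j) uses truncated nat subtraction, i.e. max(min(i,c-j),0).\<close>

definition rate :: "real \<Rightarrow> real \<Rightarrow> real \<Rightarrow> real \<Rightarrow> nat \<Rightarrow> nat \<times> nat \<Rightarrow> nat \<times> nat \<Rightarrow> real" where
  "rate l1 l2 m1 m2 c x y =
     (let i = fst x; j = snd x in
      if y = (i + 1, j) then l1
      else if y = (i, j + 1) then l2
      else if i \<ge> 1 \<and> y = (i - 1, j) then real (min i (c - j)) * m1
      else if j \<ge> 1 \<and> y = (i, j - 1) then real (min c j) * m2
      else 0)"

definition outrate :: "real \<Rightarrow> real \<Rightarrow> real \<Rightarrow> real \<Rightarrow> nat \<Rightarrow> nat \<times> nat \<Rightarrow> real" where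
  "outrate l1 l2 m1 m2 c x =
     l1 + l2 + real (min (fst x) (c - snd x)) * m1 + real (min c (snd x)) * m2"

text \<open>Uniformization constant (a bound on all outflow rates).\<close>
definition unif :: "real \<Rightarrow> real \<Rightarrow> real \<Rightarrow> real \<Rightarrow> nat \<Rightarrow> real" where
  "unif l1 l2 m1 m2 c = l1 + l2 + real c * (m1 + m2)"

definition jump :: "real \<Rightarrow> real \<Rightarrow> real \<Rightarrow> real \<Rightarrow> nat \<Rightarrow> nat \<times> nat \<Rightarrow> nat \<times> nat \<Rightarrow> real" where
  "jump l1 l2 m1 m2 c x y =
     (if x = y then 1 - outrate l1 l2 m1 m2 c x / unif l1 l2 m1 m2 c
      else rate l1 l2 m1 m2 c x y / unif l1 l2 m1 m2 c)"

text \<open>n-step distribution of the uniformized jump chain started at (0,0).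
  All predecessors of y lie in the box {0..fst y+1} x {0..snd y+1}.\<close>
fun Pn :: "real \<Rightarrow> real \<Rightarrow> real \<Rightarrow> real \<Rightarrow> nat \<Rightarrow> nat \<Rightarrow> nat \<times> nat \<Rightarrow> real" where
  "Pn l1 l2 m1 m2 c 0 y = (if y = (0, 0) then 1 else 0)"
| "Pn l1 l2 m1 m2 c (Suc n) y =
     (\<Sum>x \<in> {0..fst y + 1} \<times> {0..snd y + 1}. Pn l1 l2 m1 m2 c n x * jump l1 l2 m1 m2 c x y)"

text \<open>Transition function p_x(t) = P(X(t) = x | X(0) = (0,0)), via uniformization
  (the rates are bounded, so this is the unique transition function, exp(tQ)).\<close>
definition ptrans :: "real \<Rightarrow> real \<Rightarrow> real \<Rightarrow> real \<Rightarrow> nat \<Rightarrow> nat \<times> nat \<Rightarrow> real \<Rightarrow> real" where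
  "ptrans l1 l2 m1 m2 c x t =
     (\<Sum>n. exp (- unif l1 l2 m1 m2 c * t) * (unif l1 l2 m1 m2 c * t) ^ n / fact n
          * Pn l1 l2 m1 m2 c n x)"

definition piLT :: "real \<Rightarrow> real \<Rightarrow> real \<Rightarrow> real \<Rightarrow> nat \<Rightarrow> nat \<times> nat \<Rightarrow> complex \<Rightarrow> complex" where
  "piLT l1 l2 m1 m2 c x \<alpha> =
     integral {0..} (\<lambda>t::real. exp (- \<alpha> * complex_of_real t) * complex_of_real (ptrans l1 l2 m1 m2 c x t))"

text \<open>Busy-period LST of M/M/1 (principal complex square root; this is the correct
  branch for Re s > 0).\<close>
definition phiBP :: "real \<Rightarrow> real \<Rightarrow> complex \<Rightarrow> complex" where
  "phiBP l m s = (of_real l + of_real m + s - csqrt ((of_real l + of_real m + s)\<^sup>2 - 4 * of_real l * of_real m))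
                 / (2 * of_real l)"

definition rho2 :: "real \<Rightarrow> real \<Rightarrow> nat \<Rightarrow> real" where
  "rho2 l2 m2 c = l2 / (real c * m2)"

definition phi2 :: "real \<Rightarrow> real \<Rightarrow> real \<Rightarrow> nat \<Rightarrow> complex \<Rightarrow> complex" where
  "phi2 l1 l2 m2 c \<alpha> = phiBP l2 (real c * m2) (of_real l1 + \<alpha>)"

definition r2 :: "real \<Rightarrow> real \<Rightarrow> real \<Rightarrow> nat \<Rightarrow> complex \<Rightarrow> complex" where
  "r2 l1 l2 m2 c \<alpha> = of_real (rho2 l2 m2 c) * phi2 l1 l2 m2 c \<alpha>"

definition Omega2 :: "real \<Rightarrow> real \<Rightarrow> real \<Rightarrow> nat \<Rightarrow> complex \<Rightarrow> complex" where
  "Omega2 l1 l2 m2 c \<alpha> = of_real (rho2 l2 m2 c) * phi2 l1 l2 m2 c \<alpha>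
     / (of_real l2 * (1 - of_real (rho2 l2 m2 c) * (phi2 l1 l2 m2 c \<alpha>)\<^sup>2))"

definition R1 :: "real \<Rightarrow> real \<Rightarrow> real \<Rightarrow> nat \<Rightarrow> complex \<Rightarrow> complex" where
  "R1 l1 l2 m2 c \<alpha> = of_real l1 * Omega2 l1 l2 m2 c \<alpha>
     / (1 - r2 l1 l2 m2 c \<alpha> * phi2 l1 l2 m2 c \<alpha>)"

definition R2 :: "real \<Rightarrow> real \<Rightarrow> real \<Rightarrow> nat \<Rightarrow> complex \<Rightarrow> complex" where
  "R2 l1 l2 m2 c \<alpha> = r2 l1 l2 m2 c \<alpha> * phi2 l1 l2 m2 c \<alpha>"

text \<open>The numbers v_{i,j} (i >= j >= 0); given pi, R1, R2, c. Values with j > i are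
  set to 0 and never used.\<close>
fun vseq :: "(nat \<times> nat \<Rightarrow> complex) \<Rightarrow> complex \<Rightarrow> complex \<Rightarrow> nat \<Rightarrow> nat \<Rightarrow> nat \<Rightarrow> complex" where
  "vseq p a b c 0 j = (if j = 0 then p (0, c - 1) else 0)"
| "vseq p a b c (Suc i) j =
     (if j = 0 then p (Suc i, c - 1)
      else if j \<le> Suc i then a * (vseq p a b c i (j - 1) + b * (\<Sum>k = j..i. vseq p a b c i k))
      else 0)"

end

theory Submission
  imports Defs "HOL-Real_Asymp.Real_Asymp"
begin

text \<open>Uniformizing the chain at rate \<open>U\<close> writes \<open>p\<^sub>x(t)\<close> as a Poisson mixture of the jump-chain
  probabilities \<open>P\<^sub>n(x)\<close>, so \<open>\<pi>\<^sub>x(\<alpha>) = \<Sum>\<^sub>n P\<^sub>n(x) U\<^sup>n / (\<alpha> + U)\<^sup>n\<^sup>+\<^sup>1\<close>, and one step of the jump chain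
  gives the balance equations \<open>(\<alpha> + U) \<pi>\<^sub>y = U \<Sum>\<^sub>x J(x, y) \<pi>\<^sub>x\<close> for \<open>y \<noteq> (0, 0)\<close>.
  For \<open>y = (i, n)\<close> with \<open>n \<ge> c\<close> all servers work on class 2, and the balance equations become the
  recurrence \<open>K \<pi>(i, n) = \<lambda>\<^sub>2 \<pi>(i, n - 1) + c\<mu>\<^sub>2 \<pi>(i, n + 1) + \<lambda>\<^sub>1 \<pi>(i - 1, n)\<close> with
  \<open>K = \<alpha> + \<lambda>\<^sub>1 + \<lambda>\<^sub>2 + c\<mu>\<^sub>2\<close>. The claimed expression satisfies the same recurrence, because \<open>r\<^sub>2\<close> is the
  root of modulus \<open>< 1\<close> of \<open>c\<mu>\<^sub>2 r\<^sup>2 - K r + \<lambda>\<^sub>2\<close> and \<open>R\<^sub>1, R\<^sub>2\<close> absorb the contribution of row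
  \<open>i - 1\<close>; it agrees with \<open>\<pi>\<close> at \<open>n = c - 1\<close> and is bounded in \<open>n\<close>. Since \<open>\<bar>K\<bar> > \<lambda>\<^sub>2 + c\<mu>\<^sub>2\<close>, a
  bounded solution of the homogeneous recurrence that vanishes at one point vanishes identically,
  and induction on \<open>i\<close> concludes.\<close>

section \<open>Laplace transform of \<open>t\<^sup>n\<close>\<close>

fun exp_power_antideriv :: "complex \<Rightarrow> nat \<Rightarrow> complex \<Rightarrow> complex" where
  "exp_power_antideriv b 0 z = 1 / b"
| "exp_power_antideriv b (Suc n) z = (z ^ Suc n + of_nat (Suc n) * exp_power_antideriv b n z) / b"

lemma exp_power_antideriv_at_0:
  "b \<noteq> 0 \<Longrightarrow> exp_power_antideriv b n 0 = fact n / b ^ Suc n"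
  by (induction n) (auto simp: field_simps)

lemma has_field_derivative_exp_power_antideriv_Suc:
  assumes "b \<noteq> 0"
  shows "(exp_power_antideriv b (Suc n) has_field_derivative
           of_nat (Suc n) * exp_power_antideriv b n z) (at z)"
proof (induction n arbitrary: z)
  case 0
  show ?case using assms by (auto intro!: derivative_eq_intros)
next
  case (Suc n)
  have "(exp_power_antideriv b (Suc (Suc n)) has_field_derivative
          (of_nat (Suc (Suc n)) * z ^ Suc n + of_nat (Suc (Suc n)) * (of_nat (Suc n) * exp_power_antideriv b n z)) / b) (at z)"
    unfolding exp_power_antideriv.simps(2)[of b "Suc n"]
    by (rule derivative_eq_intros Suc refl)+ (use assms in \<open>simp_all add: field_simps\<close>)
  then show ?case
    using assms
    by (simp only: exp_power_antideriv.simps(2)[of b n z])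
       (simp add: field_simps del: exp_power_antideriv.simps)
qed

lemma has_field_derivative_exp_power_antideriv:
  assumes "b \<noteq> 0"
  shows "((\<lambda>z. - exp (- b * z) * exp_power_antideriv b n z) has_field_derivative exp (- b * z) * z ^ n) (at z)"
proof (cases n)
  case 0
  show ?thesis using assms 0 by (auto intro!: derivative_eq_intros)
next
  case (Suc k)
  show ?thesis
    unfolding Suc
    by (rule derivative_eq_intros has_field_derivative_exp_power_antideriv_Suc[OF assms] refl)+
       (use assms in \<open>simp_all add: field_simps\<close>)
qed

lemma tendsto_exp_power_antideriv:
  assumes "Re b > 0"
  shows "((\<lambda>t. exp (- b * of_real t) * exp_power_antideriv b n (of_real t)) \<longlongrightarrow> 0) at_top"
proof (induction n)
  case 0
  have "((\<lambda>t. exp (- Re b * t)) \<longlongrightarrow> 0) at_top"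
    using assms by real_asymp
  then have "((\<lambda>t. exp (- b * of_real t)) \<longlongrightarrow> 0) at_top"
    by - (rule tendsto_norm_zero_cancel, simp)
  then show ?case
    by (simp add: tendsto_divide_zero)
next
  case (Suc n)
  have "((\<lambda>t. exp (- Re b * t) * \<bar>t\<bar> ^ Suc n) \<longlongrightarrow> 0) at_top"
    using assms by real_asymp
  then have "((\<lambda>t. exp (- b * of_real t) * of_real t ^ Suc n) \<longlongrightarrow> 0) at_top"
    by - (rule tendsto_norm_zero_cancel, simp add: norm_mult norm_power)
  note tendsto_divide_zero[OF tendsto_add_zero[OF this tendsto_mult_right_zero[OF Suc.IH, of "of_nat (Suc n)"]], of b]
  moreover have "exp (- b * of_real t) * exp_power_antideriv b (Suc n) (of_real t) =
      (exp (- b * of_real t) * of_real t ^ Suc n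
        + of_nat (Suc n) * (exp (- b * of_real t) * exp_power_antideriv b n (of_real t))) / b" for t
    by (simp only: exp_power_antideriv.simps distrib_left times_divide_eq_right mult.left_commute)
  ultimately show ?case
    by (simp only:)
qed

lemma sum_power_div_fact_le_exp:
  fixes x :: real
  assumes "0 \<le> x"
  shows "(\<Sum>k<N. x ^ k / fact k) \<le> exp x"
proof -
  have "(\<lambda>k. x ^ k / fact k) sums exp x"
    using exp_converges[of x] by (simp add: divide_inverse_commute scaleR_conv_of_real)
  then have "(\<Sum>k<N. x ^ k / fact k) \<le> (\<Sum>k. x ^ k / fact k)"
    using assms by (intro sum_le_suminf sums_summable) auto
  then show ?thesis
    using \<open>(\<lambda>k. x ^ k / fact k) sums exp x\<close> by (simp add: sums_iff)
qed

lemma power_div_fact_le_exp: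
  fixes x :: real
  assumes "0 \<le> x"
  shows "x ^ n / fact n \<le> exp x"
proof -
  have "x ^ n / fact n \<le> (\<Sum>k<Suc n. x ^ k / fact k)"
    using assms by (intro member_le_sum) auto
  also have "\<dots> \<le> exp x"
    using assms by (rule sum_power_div_fact_le_exp)
  finally show ?thesis .
qed

lemma has_integral_exp_power:
  assumes b: "Re b > 0"
  shows "((\<lambda>t. exp (- b * of_real t) * of_real t ^ n) has_integral fact n / b ^ Suc n) {0..}"
proof -
  have b0: "b \<noteq> 0" using b by auto
  define e where "e = (\<lambda>t::real. exp (- b * of_real t) * of_real t ^ n)"
  define F where "F = (\<lambda>t::real. - exp (- b * of_real t) * exp_power_antideriv b n (of_real t))"
  have FTC: "(e has_integral F T - F 0) {0..T}" if "T \<ge> 0" for T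
  proof -
    have "((\<lambda>z. - exp (- b * z) * exp_power_antideriv b n z) \<circ> of_real has_vector_derivative e t)
            (at t within {0..T})" for t
      unfolding e_def
      by (rule has_complex_derivative_imp_has_vector_derivative, rule has_field_derivative_at_within,
          rule has_field_derivative_exp_power_antideriv[OF b0])
    then show ?thesis
      using that by (intro fundamental_theorem_of_calculus) (auto simp: F_def o_def)
  qed
  have F_at_top: "(\<lambda>k. F (real k)) \<longlonglongrightarrow> 0"
    using filterlim_compose[OF tendsto_exp_power_antideriv[OF b] filterlim_real_sequentially]
    by (simp add: F_def tendsto_minus_cancel_left[symmetric])
  have F0: "F 0 = - (fact n / b ^ Suc n)"
    using b0 by (simp add: F_def exp_power_antideriv_at_0)
  define \<sigma> where "\<sigma> = Re b / 2"
  define D where "D = fact n / \<sigma> ^ n"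
  have \<sigma>: "\<sigma> > 0" using b by (simp add: \<sigma>_def)
  \<comment> \<open>\<open>t ^ n \<le> D * exp (\<sigma> * t)\<close> lets half of the decay rate dominate the power.\<close>
  have e_le: "norm (e t) \<le> D * exp (- \<sigma> * t)" if "t \<ge> 0" for t
  proof -
    have "(\<sigma> * t) ^ n / fact n \<le> exp (\<sigma> * t)"
      using that \<sigma> by (intro power_div_fact_le_exp) auto
    then have "t ^ n \<le> D * exp (\<sigma> * t)"
      using \<sigma> by (simp add: D_def field_simps)
    then have "exp (- Re b * t) * t ^ n \<le> exp (- Re b * t) * (D * exp (\<sigma> * t))"
      by (intro mult_left_mono) auto
    also have "\<dots> = D * exp (- \<sigma> * t)"
    proof -
      have "exp (- Re b * t) * exp (\<sigma> * t) = exp (- \<sigma> * t)"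
        unfolding mult_exp_exp by (simp add: \<sigma>_def field_simps)
      then show ?thesis by (simp add: mult.left_commute)
    qed
    finally show ?thesis
      using that by (simp add: e_def norm_mult norm_power)
  qed
  define f where "f = (\<lambda>k::nat. \<lambda>t. if t \<in> {0..real k} then e t else 0)"
  show ?thesis unfolding e_def[symmetric]
  proof (rule has_integral_dominated_convergence[where f = f and h = "\<lambda>t. D * exp (- \<sigma> * t)"
        and y = "\<lambda>k. F (real k) - F 0"])
    show "(f k has_integral F (real k) - F 0) {0..}" for k
      unfolding f_def by (subst has_integral_restrict) (use FTC[of "real k"] in auto)
    show "(\<lambda>t. D * exp (- \<sigma> * t)) integrable_on {0..}"
      using has_integral_exp_minus_to_infinity[of \<sigma> 0] \<sigma>
      by (intro integrable_on_mult_right) (auto simp: integrable_on_def)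
    show "\<forall>t\<in>{0..}. norm (f k t) \<le> D * exp (- \<sigma> * t)" for k
      using e_le \<sigma> by (auto simp: f_def D_def)
    show "\<forall>t\<in>{0..}. (\<lambda>k. f k t) \<longlonglongrightarrow> e t"
    proof
      fix t :: real
      have "eventually (\<lambda>k. f k t = e t) sequentially" if "t \<ge> 0"
        using eventually_ge_at_top[of "nat \<lceil>t\<rceil>"]
        by (rule eventually_mono) (use that in \<open>auto simp: f_def\<close>)
      then show "t \<in> {0..} \<Longrightarrow> (\<lambda>k. f k t) \<longlonglongrightarrow> e t"
        by (simp add: tendsto_eventually)
    qed
    show "(\<lambda>k. F (real k) - F 0) \<longlonglongrightarrow> fact n / b ^ Suc n"
      using tendsto_diff[OF F_at_top tendsto_const[of "F 0"]] F0 by simp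
  qed
qed

section \<open>The uniformized chain\<close>

definition neighbours :: "nat \<times> nat \<Rightarrow> (nat \<times> nat) set" where
  "neighbours x = {x, (fst x + 1, snd x), (fst x, snd x + 1)}
     \<union> (if fst x \<ge> 1 then {(fst x - 1, snd x)} else {})
     \<union> (if snd x \<ge> 1 then {(fst x, snd x - 1)} else {})"

lemma finite_neighbours [simp]: "finite (neighbours x)"
  by (simp add: neighbours_def)

lemma rate_eq_0_outside_neighbours:
  "y \<notin> neighbours x \<Longrightarrow> rate l1 l2 m1 m2 c x y = 0"
  by (cases x) (auto simp: neighbours_def rate_def)

lemma jump_eq_0_outside_neighbours:
  "y \<notin> neighbours x \<Longrightarrow> jump l1 l2 m1 m2 c x y = 0"
  by (auto simp: jump_def neighbours_def rate_eq_0_outside_neighbours)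

lemma rate_into_eq_0:
  assumes "x \<notin> {(i - 1, n), (i, n - 1), (i + 1, n), (i, n + 1)}"
  shows "rate l1 l2 m1 m2 c x (i, n) = 0"
  using assms by (cases x) (auto simp: rate_def)

lemma sum_jump_neighbours:
  assumes "unif l1 l2 m1 m2 c \<noteq> 0"
  shows "(\<Sum>y\<in>neighbours x. jump l1 l2 m1 m2 c x y) = 1"
proof -
  obtain a b where x: "x = (a, b)" by (cases x)
  show ?thesis
    using assms unfolding x
    by (cases a; cases b) (simp_all add: neighbours_def jump_def rate_def outrate_def field_simps)
qed

locale priority_queue =
  fixes l1 l2 m1 m2 :: real and c :: nat
  assumes l1_pos: "l1 > 0" and l2_pos: "l2 > 0" and m1_pos: "m1 > 0" and m2_pos: "m2 > 0"
begin

abbreviation "U \<equiv> unif l1 l2 m1 m2 c"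
abbreviation "J \<equiv> jump l1 l2 m1 m2 c"
abbreviation "P \<equiv> Pn l1 l2 m1 m2 c"

lemma unif_pos: "U > 0"
  using l1_pos l2_pos m1_pos m2_pos by (simp add: unif_def add_pos_nonneg)

lemma jump_nonneg: "J x y \<ge> 0"
proof -
  have "real (min (fst x) (c - snd x)) * m1 \<le> real c * m1"
       "real (min c (snd x)) * m2 \<le> real c * m2"
    using m1_pos m2_pos by (auto intro!: mult_right_mono)
  then have "outrate l1 l2 m1 m2 c x \<le> U"
    by (simp add: outrate_def unif_def algebra_simps)
  moreover have "rate l1 l2 m1 m2 c x y \<ge> 0"
    using l1_pos l2_pos m1_pos m2_pos by (auto simp: rate_def Let_def)
  ultimately show ?thesis
    using unif_pos by (auto simp: jump_def)
qed

lemma sum_jump_le_1: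
  assumes "finite A"
  shows "(\<Sum>y\<in>A. J x y) \<le> 1"
proof -
  have "(\<Sum>y\<in>A. J x y) = (\<Sum>y\<in>A \<inter> neighbours x. J x y)"
    using assms by (intro sum.mono_neutral_right) (auto simp: jump_eq_0_outside_neighbours)
  also have "\<dots> \<le> (\<Sum>y\<in>neighbours x. J x y)"
    by (intro sum_mono2) (auto simp: jump_nonneg)
  also have "\<dots> = 1"
    using unif_pos by (intro sum_jump_neighbours) simp
  finally show ?thesis .
qed

lemma Pn_nonneg: "P n y \<ge> 0"
  by (induction n arbitrary: y) (auto intro!: sum_nonneg mult_nonneg_nonneg jump_nonneg)

lemma sum_Pn_square_le_1: "(\<Sum>y\<in>{0..M} \<times> {0..M}. P n y) \<le> 1"
proof (induction n arbitrary: M)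
  case 0
  show ?case by (simp add: sum.If_cases)
next
  case (Suc n)
  let ?B = "{0..M} \<times> {0..M}" and ?B' = "{0..Suc M} \<times> {0..Suc M}"
  have "P (Suc n) y = (\<Sum>x\<in>?B'. P n x * J x y)" if "y \<in> ?B" for y
    using that
    by (simp, intro sum.mono_neutral_left)
       (auto intro!: jump_eq_0_outside_neighbours simp: neighbours_def split: if_splits)
  then have "(\<Sum>y\<in>?B. P (Suc n) y) = (\<Sum>x\<in>?B'. P n x * (\<Sum>y\<in>?B. J x y))"
    by (simp add: sum_distrib_left sum.swap[of _ ?B])
  also have "\<dots> \<le> (\<Sum>x\<in>?B'. P n x)"
    by (intro sum_mono mult_left_le sum_jump_le_1 Pn_nonneg) auto
  also have "\<dots> \<le> 1"
    by (rule Suc.IH)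
  finally show ?case .
qed

lemma Pn_le_1: "P n y \<le> 1"
proof -
  let ?M = "max (fst y) (snd y)"
  have "P n y \<le> (\<Sum>y\<in>{0..?M} \<times> {0..?M}. P n y)"
    by (rule member_le_sum) (auto simp: Pn_nonneg mem_Times_iff)
  also have "\<dots> \<le> 1"
    by (rule sum_Pn_square_le_1)
  finally show ?thesis .
qed

lemma ptrans_sums:
  "(\<lambda>n. exp (- U * t) * (U * t) ^ n / fact n * P n x) sums ptrans l1 l2 m1 m2 c x t"
proof -
  have "summable (\<lambda>n. exp (- U * t) * (\<bar>U * t\<bar> ^ n / fact n))"
    using exp_converges[of "\<bar>U * t\<bar>"]
    by (intro summable_mult) (simp add: sums_iff divide_inverse_commute scaleR_conv_of_real)
  moreover have "norm (exp (- U * t) * (U * t) ^ n / fact n * P n x)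
                   \<le> exp (- U * t) * (\<bar>U * t\<bar> ^ n / fact n)" for n
  proof -
    have "norm (exp (- U * t) * (U * t) ^ n / fact n * P n x)
            = exp (- U * t) * (\<bar>U * t\<bar> ^ n / fact n) * P n x"
      using Pn_nonneg[of n x] by (simp add: abs_mult power_abs)
    also have "\<dots> \<le> exp (- U * t) * (\<bar>U * t\<bar> ^ n / fact n)"
      using Pn_nonneg[of n x] Pn_le_1[of n x] by (intro mult_left_le) auto
    finally show ?thesis .
  qed
  ultimately have "summable (\<lambda>n. exp (- U * t) * (U * t) ^ n / fact n * P n x)"
    by (rule summable_comparison_test')
  then show ?thesis
    unfolding ptrans_def by (rule summable_sums)
qed

lemma norm_laplace_term_le:
  fixes \<beta> :: complex
  shows "norm (of_real (P n x * U ^ n) / \<beta> ^ Suc n) \<le> (1 / norm \<beta>) * (U / norm \<beta>) ^ n"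
proof -
  have "norm (of_real (P n x * U ^ n) / \<beta> ^ Suc n) = P n x * U ^ n / norm \<beta> ^ Suc n"
    using Pn_nonneg[of n x] unif_pos by (simp add: norm_divide norm_mult norm_power)
  also have "\<dots> \<le> U ^ n / norm \<beta> ^ Suc n"
    using Pn_nonneg[of n x] Pn_le_1[of n x] unif_pos
    by (intro divide_right_mono mult_left_le_one_le) auto
  finally show ?thesis by (simp add: power_divide)
qed

lemma unif_less_norm: "Re \<alpha> > 0 \<Longrightarrow> U < norm (\<alpha> + of_real U)"
  using complex_Re_le_cmod[of "\<alpha> + of_real U"] by simp

lemma piLT_sums:
  assumes \<alpha>: "Re \<alpha> > 0"
  shows "(\<lambda>n. of_real (P n x * U ^ n) / (\<alpha> + of_real U) ^ Suc n) sums piLT l1 l2 m1 m2 c x \<alpha>"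
proof -
  define \<beta> where "\<beta> = \<alpha> + of_real U"
  define a where "a = (\<lambda>n. of_real (P n x * U ^ n) / \<beta> ^ Suc n)"
  have "U < norm \<beta>" unfolding \<beta>_def using \<alpha> by (rule unif_less_norm)
  then have "U / norm \<beta> < 1" using unif_pos by (simp add: divide_less_eq)
  then have geom: "summable (\<lambda>n. (1 / norm \<beta>) * (U / norm \<beta>) ^ n)"
    using unif_pos by (simp add: summable_mult summable_geometric)
  have "summable a"
    unfolding a_def by (rule summable_comparison_test'[OF geom]) (rule norm_laplace_term_le)
  define s where "s = (\<lambda>N t. \<Sum>n<N. exp (- U * t) * (U * t) ^ n / fact n * P n x)"
  define F where "F = (\<lambda>N t. exp (- \<alpha> * of_real t) * of_real (s N t))"
  have F_sum: "F N t = (\<Sum>n<N. of_real (P n x * U ^ n / fact n) * (exp (- \<beta> * of_real t) * of_real t ^ n))"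
    for N t
  proof -
    have "- \<beta> * of_real t = - \<alpha> * of_real t + of_real (- U * t)"
      by (simp add: \<beta>_def algebra_simps)
    then have "exp (- \<beta> * of_real t) = exp (- \<alpha> * of_real t) * of_real (exp (- U * t))"
      by (simp only: exp_add exp_of_real)
    then show ?thesis
      by (simp add: F_def s_def sum_distrib_left power_mult_distrib mult_ac)
  qed
  have s_bounds: "0 \<le> s N t \<and> s N t \<le> 1" if "t \<ge> 0" for N t
  proof -
    have "s N t \<le> (\<Sum>n<N. exp (- U * t) * (U * t) ^ n / fact n)"
      unfolding s_def by (intro sum_mono mult_left_le Pn_le_1) (use that unif_pos in auto)
    also have "\<dots> = exp (- U * t) * (\<Sum>n<N. (U * t) ^ n / fact n)"
      by (simp add: sum_distrib_left)
    also have "\<dots> \<le> exp (- U * t) * exp (U * t)"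
      using that unif_pos by (intro mult_left_mono sum_power_div_fact_le_exp) auto
    moreover have "0 \<le> s N t"
      unfolding s_def using that unif_pos
      by (intro sum_nonneg mult_nonneg_nonneg divide_nonneg_nonneg Pn_nonneg) auto
    ultimately show ?thesis
      by (simp add: mult_exp_exp)
  qed
  have "((\<lambda>t. exp (- \<alpha> * of_real t) * of_real (ptrans l1 l2 m1 m2 c x t)) has_integral suminf a) {0..}"
  proof (rule has_integral_dominated_convergence[where f = F and h = "\<lambda>t. exp (- Re \<alpha> * t)"
        and y = "\<lambda>N. \<Sum>n<N. a n"])
    show "(F N has_integral (\<Sum>n<N. a n)) {0..}" for N
    proof -
      have "((\<lambda>t. of_real (P n x * U ^ n / fact n) * (exp (- \<beta> * of_real t) * of_real t ^ n))
              has_integral a n) {0..}" for n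
      proof -
        have "Re \<beta> > 0" using \<alpha> unif_pos by (simp add: \<beta>_def)
        note has_integral_mult_right[OF has_integral_exp_power[OF this, of n],
               where c = "of_real (P n x * U ^ n / fact n)"]
        moreover have "of_real (P n x * U ^ n / fact n) * (fact n / \<beta> ^ Suc n) = a n"
          by (simp add: a_def)
        ultimately show ?thesis by (simp only:)
      qed
      then have "((\<lambda>t. \<Sum>n<N. of_real (P n x * U ^ n / fact n) * (exp (- \<beta> * of_real t) * of_real t ^ n))
                   has_integral (\<Sum>n<N. a n)) {0..}"
        by (intro has_integral_sum) auto
      then show ?thesis
        by (simp only: F_sum[symmetric])
    qed
    show "(\<lambda>t. exp (- Re \<alpha> * t)) integrable_on {0..}"
      using has_integral_exp_minus_to_infinity[of "Re \<alpha>" 0] \<alpha> by (auto simp: integrable_on_def)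
    show "\<forall>t\<in>{0..}. norm (F N t) \<le> exp (- Re \<alpha> * t)" for N
      using s_bounds by (simp add: F_def norm_mult mult_left_le)
    show "\<forall>t\<in>{0..}. (\<lambda>N. F N t) \<longlonglongrightarrow> exp (- \<alpha> * of_real t) * of_real (ptrans l1 l2 m1 m2 c x t)"
    proof
      fix t :: real
      have "(\<lambda>N. s N t) \<longlonglongrightarrow> ptrans l1 l2 m1 m2 c x t"
        using ptrans_sums by (simp add: s_def sums_def)
      then show "(\<lambda>N. F N t) \<longlonglongrightarrow> exp (- \<alpha> * of_real t) * of_real (ptrans l1 l2 m1 m2 c x t)"
        unfolding F_def by (rule tendsto_mult_left[OF tendsto_of_real])
    qed
    show "(\<lambda>N. \<Sum>n<N. a n) \<longlonglongrightarrow> suminf a"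
      using \<open>summable a\<close> by (rule summable_LIMSEQ)
  qed
  then have "piLT l1 l2 m1 m2 c x \<alpha> = suminf a"
    unfolding piLT_def by (rule integral_unique)
  with summable_sums[OF \<open>summable a\<close>] show ?thesis
    by (simp only: a_def \<beta>_def)
qed

lemma norm_piLT_le:
  assumes \<alpha>: "Re \<alpha> > 0"
  shows "norm (piLT l1 l2 m1 m2 c x \<alpha>) \<le> 1 / (norm (\<alpha> + of_real U) - U)"
proof -
  define \<beta> where "\<beta> = \<alpha> + of_real U"
  have "U < norm \<beta>" unfolding \<beta>_def using \<alpha> by (rule unif_less_norm)
  then have "U / norm \<beta> < 1" using unif_pos by (simp add: divide_less_eq)
  then have geom: "(\<lambda>n. (1 / norm \<beta>) * (U / norm \<beta>) ^ n) sums ((1 / norm \<beta>) * (1 / (1 - U / norm \<beta>)))"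
    using unif_pos by (intro sums_mult geometric_sums) auto
  have "norm (piLT l1 l2 m1 m2 c x \<alpha>) \<le> (1 / norm \<beta>) * (1 / (1 - U / norm \<beta>))"
    using piLT_sums[OF \<alpha>, of x] geom unfolding \<beta>_def[symmetric]
    by (rule norm_sums_le) (rule norm_laplace_term_le)
  also have "\<dots> = 1 / (norm \<beta> - U)"
    using \<open>U < norm \<beta>\<close> unif_pos by (auto simp: field_simps)
  finally show ?thesis by (simp add: \<beta>_def)
qed

lemma piLT_balance:
  assumes \<alpha>: "Re \<alpha> > 0" and y: "y \<noteq> (0, 0)"
  shows "(\<alpha> + of_real U) * piLT l1 l2 m1 m2 c y \<alpha> =
     of_real U * (\<Sum>x\<in>{0..fst y + 1} \<times> {0..snd y + 1}. of_real (J x y) * piLT l1 l2 m1 m2 c x \<alpha>)"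
proof -
  define \<beta> where "\<beta> = \<alpha> + of_real U"
  define B where "B = {0..fst y + 1} \<times> {0..snd y + 1}"
  define a where "a = (\<lambda>x n. of_real (P n x * U ^ n) / \<beta> ^ Suc n)"
  have \<beta>: "\<beta> \<noteq> 0" using \<alpha> unif_pos by (auto simp: \<beta>_def complex_eq_iff)
  have a_sums: "a x sums piLT l1 l2 m1 m2 c x \<alpha>" for x
    using piLT_sums[OF \<alpha>, of x] by (simp add: a_def \<beta>_def)
  \<comment> \<open>One step of the jump chain, \<open>P (Suc n) = P n J\<close>, turns into the balance equation termwise.\<close>
  have step: "\<beta> * a y (Suc n) = (\<Sum>x\<in>B. of_real (U * J x y) * a x n)" for n
  proof -
    have "\<beta> * a y (Suc n) = of_real (P (Suc n) y * U ^ Suc n) / \<beta> ^ Suc n"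
      using \<beta> by (simp add: a_def)
    also have "\<dots> = (\<Sum>x\<in>B. of_real (U * J x y) * a x n)"
      by (simp add: a_def B_def sum_divide_distrib sum_distrib_left mult_ac)
    finally show ?thesis .
  qed
  have "(\<lambda>n. \<beta> * a y (Suc n)) sums (\<beta> * piLT l1 l2 m1 m2 c y \<alpha>)"
    using sums_mult[OF a_sums[of y], of \<beta>] y by (subst sums_Suc_iff) (simp add: a_def)
  moreover have "(\<lambda>n. \<beta> * a y (Suc n)) sums (\<Sum>x\<in>B. of_real (U * J x y) * piLT l1 l2 m1 m2 c x \<alpha>)"
    unfolding step by (intro sums_sum sums_mult a_sums)
  ultimately have "\<beta> * piLT l1 l2 m1 m2 c y \<alpha> = (\<Sum>x\<in>B. of_real (U * J x y) * piLT l1 l2 m1 m2 c x \<alpha>)"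
    by (rule sums_unique2)
  then show ?thesis
    by (simp add: \<beta>_def B_def sum_distrib_left mult.assoc)
qed

end

section \<open>The root \<open>r\<^sub>2\<close>\<close>

\<comment> \<open>The root of \<open>q r\<^sup>2 - K r + p\<close> of smaller modulus; \<open>r\<^sub>2\<close> is the case \<open>p = \<lambda>\<^sub>2\<close>, \<open>q = c\<mu>\<^sub>2\<close>.\<close>
definition small_root :: "real \<Rightarrow> real \<Rightarrow> complex \<Rightarrow> complex" where
  "small_root p q K = (K - csqrt (K\<^sup>2 - of_real (4 * p * q))) / of_real (2 * q)"

lemma norm_diff_less_norm_add_csqrt:
  fixes K :: complex and p q :: real
  assumes p: "p > 0" and q: "q > 0" and K: "Re K > p + q"
  defines "w \<equiv> csqrt (K\<^sup>2 - of_real (4 * p * q))"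
  shows "norm (K - w) < norm (K + w)"
proof -
  define x y u v where "x = Re K" and "y = Im K" and "u = Re w" and "v = Im w"
  have x: "x > p + q" using K by (simp add: x_def)
  have "w\<^sup>2 = K\<^sup>2 - of_real (4 * p * q)" by (simp add: w_def)
  then have e1: "u\<^sup>2 - v\<^sup>2 = x\<^sup>2 - y\<^sup>2 - 4 * p * q" and e2: "u * v = x * y"
    by (auto simp: complex_eq_iff power2_eq_square x_def y_def u_def v_def algebra_simps)
  have "4 * p * q \<le> (p + q)\<^sup>2"
    using sum_power2_ge_zero[of "p - q" 0] by (simp add: power2_eq_square algebra_simps)
  also have "\<dots> < x\<^sup>2" using x p q by (intro power_strict_mono) auto
  finally have "4 * p * q < x\<^sup>2" .
  have "u \<noteq> 0"
  proof
    assume "u = 0"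
    then have "y = 0" using e2 x p q by auto
    then have "x\<^sup>2 - 4 * p * q = - v\<^sup>2" using e1 \<open>u = 0\<close> by simp
    then show False using \<open>4 * p * q < x\<^sup>2\<close> zero_le_power2[of v] by linarith
  qed
  then have u: "u > 0" using Re_csqrt[of "K\<^sup>2 - of_real (4 * p * q)"] by (simp add: u_def w_def)
  \<comment> \<open>\<open>Re (conj K * w) = x u + y v\<close> is positive because \<open>u * (x u + y v) = x (u\<^sup>2 + y\<^sup>2)\<close>.\<close>
  have "u * (x * u + y * v) = x * (u\<^sup>2 + y\<^sup>2)" using e2 by (simp add: algebra_simps power2_eq_square)
  moreover have "x * (u\<^sup>2 + y\<^sup>2) > 0" using x p q u by (intro mult_pos_pos add_pos_nonneg) auto
  ultimately have "x * u + y * v > 0" using u by (metis zero_less_mult_pos)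
  moreover have "(norm (K - w))\<^sup>2 = (x - u)\<^sup>2 + (y - v)\<^sup>2"
    and "(norm (K + w))\<^sup>2 = (x + u)\<^sup>2 + (y + v)\<^sup>2"
    by (simp_all add: cmod_power2 x_def y_def u_def v_def)
  ultimately have "(norm (K - w))\<^sup>2 < (norm (K + w))\<^sup>2"
    by (simp add: power2_eq_square algebra_simps)
  then show ?thesis by (meson norm_ge_zero power2_less_imp_less)
qed

context
  fixes p q :: real and K :: complex
  assumes p: "p > 0" and q: "q > 0" and K: "Re K > p + q"
begin

private definition "w = csqrt (K\<^sup>2 - of_real (4 * p * q))"
private definition "r' = (K + w) / of_real (2 * q)"

private lemma small_root_def': "small_root p q K = (K - w) / of_real (2 * q)"
  by (simp add: small_root_def w_def)

private lemma sum_roots: "small_root p q K + r' = K / of_real q"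
  using q by (simp add: small_root_def' r'_def field_simps)

private lemma prod_roots: "small_root p q K * r' = of_real (p / q)"
proof -
  have "w\<^sup>2 = K\<^sup>2 - of_real (4 * p * q)"
    by (simp add: w_def)
  then have "(K - w) * (K + w) = of_real (4 * p * q)"
    by (simp add: algebra_simps power2_eq_square)
  then show ?thesis
    using q by (simp add: small_root_def' r'_def field_simps)
qed

private lemma norm_small_root_less: "norm (small_root p q K) < norm r'"
  using norm_diff_less_norm_add_csqrt[OF p q K] q
  by (simp add: small_root_def' r'_def w_def norm_divide divide_strict_right_mono)

lemma small_root_eq: "K * small_root p q K = of_real p + of_real q * (small_root p q K)\<^sup>2"
proof -
  define r s where "r = small_root p q K" and "s = r'"
  have K_eq: "K = of_real q * (r + s)" and p_eq: "of_real p = of_real q * (r * s)"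
    using sum_roots prod_roots q by (simp_all add: r_def s_def field_simps)
  have "K * r = of_real p + of_real q * r\<^sup>2"
    unfolding K_eq p_eq by (simp add: algebra_simps power2_eq_square)
  then show ?thesis by (simp add: r_def)
qed

lemma small_root_nonzero: "small_root p q K \<noteq> 0"
  using prod_roots p q by auto

lemma small_root_square_neq: "of_real q * (small_root p q K)\<^sup>2 \<noteq> of_real p"
proof
  define r where "r = small_root p q K"
  assume "of_real q * (small_root p q K)\<^sup>2 = of_real p"
  then have "of_real q * (r * r) = of_real q * (r * r')"
    using prod_roots q by (simp add: r_def power2_eq_square)
  then have "r = r'" using small_root_nonzero q by (simp add: r_def)
  then show False using norm_small_root_less by (simp add: r_def)
qed

\<comment> \<open>If \<open>\<bar>r\<bar> \<ge> 1\<close> then also \<open>\<bar>r'\<bar> > 1\<close>, and \<open>(\<bar>r\<bar> - 1) (\<bar>r'\<bar> - 1) \<ge> 0\<close> contradicts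
  \<open>\<bar>r\<bar> + \<bar>r'\<bar> \<ge> \<bar>K\<bar> / q > p / q + 1 = \<bar>r\<bar> \<bar>r'\<bar> + 1\<close>.\<close>
lemma norm_small_root_less_1: "norm (small_root p q K) < 1"
proof (rule ccontr)
  define r where "r = small_root p q K"
  assume "\<not> norm (small_root p q K) < 1"
  then have "(norm r - 1) * (norm r' - 1) \<ge> 0"
    using norm_small_root_less by (simp add: r_def)
  moreover have "norm r + norm r' \<ge> norm K / q"
    using sum_roots norm_triangle_ineq[of r r'] q by (simp add: r_def norm_divide)
  moreover have "norm K > p + q"
    using K complex_Re_le_cmod[of K] by linarith
  moreover have "norm r * norm r' = p / q"
    using prod_roots p q by (simp add: r_def norm_mult[symmetric] norm_divide)
  ultimately show False
    using q by (simp add: field_simps)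
qed

end

section \<open>The candidate solution\<close>

definition multichoose :: "nat \<Rightarrow> nat \<Rightarrow> nat" where
  "multichoose m k = (if m = 0 then (if k = 0 then 1 else 0) else (m - 1 + k) choose k)"

lemma multichoose_0_right [simp]: "multichoose m 0 = 1"
  by (simp add: multichoose_def)

lemma multichoose_Suc_Suc:
  "multichoose (Suc m) (Suc k) = multichoose m (Suc k) + multichoose (Suc m) k"
  by (cases m) (simp_all add: multichoose_def)

lemma multichoose_Suc_left: "multichoose (Suc m) k = (\<Sum>j\<le>k. multichoose m j)"
  by (induction k) (simp_all add: multichoose_Suc_Suc)

lemma sum_triangle_swap:
  fixes a b :: "nat \<Rightarrow> 'a::comm_ring_1"
  shows "(\<Sum>k\<le>i. a k * (\<Sum>j<k. b j)) = (\<Sum>j<i. b j * (\<Sum>k=Suc j..i. a k))"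
proof (induction i)
  case (Suc i)
  have "(\<Sum>j<Suc i. b j * (\<Sum>k=Suc j..Suc i. a k))
      = (\<Sum>j<Suc i. b j * (\<Sum>k=Suc j..i. a k) + b j * a (Suc i))"
    by (intro sum.cong refl) (simp add: algebra_simps)
  also have "\<dots> = (\<Sum>j<i. b j * (\<Sum>k=Suc j..i. a k)) + a (Suc i) * (\<Sum>j<Suc i. b j)"
    by (simp add: sum.distrib sum_distrib_right[symmetric] algebra_simps)
  finally show ?case using Suc by simp
qed simp

context
  notes vseq.simps [simp del]
begin

lemma vseq_Suc_Suc:
  "j \<le> i \<Longrightarrow> vseq f A B c (Suc i) (Suc j) = A * (vseq f A B c i j + B * (\<Sum>k=Suc j..i. vseq f A B c i k))"
  by (simp add: vseq.simps)

lemma sum_vseq_tail: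
  assumes "j \<le> Suc i"
  shows "(\<Sum>k=Suc j..Suc i. (1 - B) ^ k * vseq f A B c (Suc i) k)
           = A * (1 - B) ^ Suc j * (\<Sum>k=j..i. vseq f A B c i k)"
  using assms
proof (induction j rule: inc_induct)
  case (step n)
  have split_Suc: "(\<Sum>k=Suc n..Suc i. (1 - B) ^ k * vseq f A B c (Suc i) k)
      = (1 - B) ^ Suc n * vseq f A B c (Suc i) (Suc n)
        + (\<Sum>k=Suc (Suc n)..Suc i. (1 - B) ^ k * vseq f A B c (Suc i) k)"
    using step.hyps by (subst sum.atLeast_Suc_atMost) auto
  have split: "(\<Sum>k=n..i. vseq f A B c i k) = vseq f A B c i n + (\<Sum>k=Suc n..i. vseq f A B c i k)"
    using step.hyps by (subst sum.atLeast_Suc_atMost) auto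
  show ?case
    using step.hyps
    unfolding split_Suc step.IH split by (simp add: vseq_Suc_Suc algebra_simps)
qed simp

end

\<comment> \<open>The right-hand side of the theorem with \<open>j = m\<close>; since \<open>multichoose 0 k = [k = 0]\<close>, at \<open>m = 0\<close> it
  reduces to \<open>vseq f A B c i 0\<close>, i.e. to \<open>\<pi>(i, c - 1)\<close>.\<close>
definition pi_candidate ::
    "(nat \<times> nat \<Rightarrow> complex) \<Rightarrow> complex \<Rightarrow> complex \<Rightarrow> complex \<Rightarrow> nat \<Rightarrow> nat \<Rightarrow> nat \<Rightarrow> complex" where
  "pi_candidate f A B r c i m =
     (\<Sum>k\<le>i. vseq f A B c i k * (1 - B) ^ k * (of_nat (multichoose m k) * r ^ m))"

lemma pi_candidate_0: "pi_candidate f A B r c i 0 = vseq f A B c i 0"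
proof -
  have "pi_candidate f A B r c i 0 = (\<Sum>k\<le>i. if k = 0 then vseq f A B c i 0 else 0)"
    unfolding pi_candidate_def by (intro sum.cong) (auto simp: multichoose_def)
  then show ?thesis by simp
qed

lemma pi_candidate_Suc:
  "pi_candidate f A B r c i (Suc m) =
     (\<Sum>k = 0..i. vseq f A B c i k * (1 - B) ^ k * of_nat ((Suc m - 1 + k) choose k) * r ^ Suc m)"
  unfolding pi_candidate_def atMost_atLeast0 by (simp add: multichoose_def mult.assoc)

\<comment> \<open>The identities between \<open>K\<close>, \<open>\<lambda>\<^sub>1\<close>, \<open>\<lambda>\<^sub>2\<close>, \<open>q = c\<mu>\<^sub>2\<close>, \<open>r = r\<^sub>2\<close>, \<open>A = R\<^sub>1\<close>, \<open>B = R\<^sub>2\<close> that make the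
  candidate solve the balance recurrence.\<close>
locale candidate_balance =
  fixes K l1 l2 q r A B :: complex
  assumes root: "K * r = l2 + q * r\<^sup>2"
    and r_nonzero: "r \<noteq> 0"
    and B_eq: "q * r = l2 / r * B"
    and A_eq: "A * (1 - B) * (l2 / r - q * r) = l1"
begin

definition geom :: "nat \<Rightarrow> nat \<Rightarrow> complex" where
  "geom k m = of_nat (multichoose m k) * r ^ m"

definition coeff :: "(nat \<times> nat \<Rightarrow> complex) \<Rightarrow> nat \<Rightarrow> nat \<Rightarrow> nat \<Rightarrow> complex" where
  "coeff f c i k = vseq f A B c i k * (1 - B) ^ k"

context
  notes vseq.simps [simp del]
begin

lemma pi_candidate_eq: "pi_candidate f A B r c i m = (\<Sum>k\<le>i. coeff f c i k * geom k m)"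
  by (simp add: pi_candidate_def coeff_def geom_def)

lemma balance_geom:
  "K * geom k (Suc m) - l2 * geom k m - q * geom k (Suc (Suc m)) =
     (if k = 0 then 0 else l2 / r * geom (k - 1) (Suc m)) - q * r * (\<Sum>j<k. geom j (Suc m))"
proof -
  let ?h = "\<lambda>k m. of_nat (multichoose m k) :: complex"
  have "K * r ^ Suc m = r ^ m * (K * r)"
    by (simp add: algebra_simps)
  then have "K * geom k (Suc m) = ?h k (Suc m) * (r ^ m * (l2 + q * r\<^sup>2))"
    using root by (simp add: geom_def mult_ac)
  then have "K * geom k (Suc m) - l2 * geom k m - q * geom k (Suc (Suc m))
     = r ^ m * (l2 * (?h k (Suc m) - ?h k m) - q * r\<^sup>2 * (?h k (Suc (Suc m)) - ?h k (Suc m)))"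
    by (simp add: geom_def algebra_simps power2_eq_square)
  also have "\<dots> = (if k = 0 then 0 else l2 / r * geom (k - 1) (Suc m)) - q * r * (\<Sum>j<k. geom j (Suc m))"
  proof (cases k)
    case (Suc k')
    have "?h k (Suc m) - ?h k m = ?h k' (Suc m)"
      using multichoose_Suc_Suc[of m k'] Suc by simp
    moreover have "?h k (Suc (Suc m)) - ?h k (Suc m) = (\<Sum>j<k. ?h j (Suc m))"
      using multichoose_Suc_Suc[of "Suc m" k'] multichoose_Suc_left[of "Suc m" k'] Suc
      by (simp add: lessThan_Suc_atMost)
    ultimately show ?thesis
      using Suc r_nonzero
      by (simp add: geom_def sum_distrib_left sum_distrib_right power2_eq_square algebra_simps)
  qed simp
  finally show ?thesis .
qed

lemma balance_coeff:
  assumes "j \<le> i"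
  shows "l2 / r * coeff f c (Suc i) (Suc j) - q * r * (\<Sum>k=Suc j..Suc i. coeff f c (Suc i) k)
           = l1 * coeff f c i j"
proof -
  define a where "a = 1 - B"
  define S where "S = (\<lambda>j. \<Sum>k=j..i. vseq f A B c i k)"
  define T where "T = (\<lambda>j. \<Sum>k=j..Suc i. coeff f c (Suc i) k)"
  have T: "T (Suc j) = A * a ^ Suc j * S j" if "j \<le> Suc i" for j
    using sum_vseq_tail[OF that, of B f A c] by (simp add: T_def S_def coeff_def a_def mult.commute)
  have coeff_T: "coeff f c (Suc i) (Suc j) = T (Suc j) - T (Suc (Suc j))"
    using assms unfolding T_def by (subst sum.atLeast_Suc_atMost) simp_all
  have S: "S j = vseq f A B c i j + S (Suc j)"
    using assms by (simp add: S_def sum.atLeast_Suc_atMost)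
  have a: "l2 / r * a = l2 / r - q * r"
    using B_eq by (simp add: a_def right_diff_distrib)
  have "l2 / r * coeff f c (Suc i) (Suc j) - q * r * T (Suc j)
      = (l2 / r - q * r) * T (Suc j) - l2 / r * T (Suc (Suc j))"
    unfolding coeff_T by (simp add: algebra_simps)
  also have "\<dots> = A * a ^ Suc j * ((l2 / r - q * r) * S j - (l2 / r * a) * S (Suc j))"
    using assms T[of j] T[of "Suc j"] by (simp add: algebra_simps)
  also have "\<dots> = (A * a * (l2 / r - q * r)) * (a ^ j * vseq f A B c i j)"
    unfolding a S by (simp add: algebra_simps)
  also have "\<dots> = l1 * coeff f c i j"
    using A_eq by (simp add: coeff_def a_def mult.commute)
  finally show ?thesis by (simp add: T_def)
qed

lemma balance_pi_candidate:
  "K * pi_candidate f A B r c i (Suc m) - l2 * pi_candidate f A B r c i m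
     - q * pi_candidate f A B r c i (Suc (Suc m))
   = (if i = 0 then 0 else l1 * pi_candidate f A B r c (i - 1) (Suc m))"
proof -
  have "K * pi_candidate f A B r c i (Suc m) - l2 * pi_candidate f A B r c i m
          - q * pi_candidate f A B r c i (Suc (Suc m))
      = (\<Sum>k\<le>i. coeff f c i k * (K * geom k (Suc m) - l2 * geom k m - q * geom k (Suc (Suc m))))"
    by (simp add: pi_candidate_eq sum_distrib_left sum_subtractf sum.distrib algebra_simps)
  also have "\<dots> = (\<Sum>k\<le>i. coeff f c i k * (if k = 0 then 0 else l2 / r * geom (k - 1) (Suc m)))
       - q * r * (\<Sum>k\<le>i. coeff f c i k * (\<Sum>j<k. geom j (Suc m)))"
    unfolding balance_geom by (simp add: sum_subtractf sum_distrib_left algebra_simps)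
  also have "\<dots> = (if i = 0 then 0 else l1 * pi_candidate f A B r c (i - 1) (Suc m))"
  proof (cases i)
    case (Suc i')
    have "(\<Sum>k\<le>i. coeff f c i k * (if k = 0 then 0 else l2 / r * geom (k - 1) (Suc m)))
        = (\<Sum>j\<le>i'. l2 / r * coeff f c i (Suc j) * geom j (Suc m))"
      unfolding Suc by (subst sum.atMost_Suc_shift) (simp add: mult_ac)
    moreover have "(\<Sum>k\<le>i. coeff f c i k * (\<Sum>j<k. geom j (Suc m)))
        = (\<Sum>j\<le>i'. geom j (Suc m) * (\<Sum>k=Suc j..i. coeff f c i k))"
      unfolding sum_triangle_swap Suc by (simp add: lessThan_Suc_atMost)
    moreover have "(\<Sum>j\<le>i'. l2 / r * coeff f c i (Suc j) * geom j (Suc m))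
          - q * r * (\<Sum>j\<le>i'. geom j (Suc m) * (\<Sum>k=Suc j..i. coeff f c i k))
        = (\<Sum>j\<le>i'. (l2 / r * coeff f c (Suc i') (Suc j)
             - q * r * (\<Sum>k=Suc j..Suc i'. coeff f c (Suc i') k)) * geom j (Suc m))"
      unfolding Suc by (simp add: sum_distrib_left sum_subtractf algebra_simps)
    moreover have "\<dots> = (\<Sum>j\<le>i'. l1 * coeff f c i' j * geom j (Suc m))"
      by (rule sum.cong[OF refl], subst balance_coeff) auto
    moreover have "\<dots> = l1 * pi_candidate f A B r c i' (Suc m)"
      by (simp add: pi_candidate_eq sum_distrib_left mult.assoc)
    ultimately show ?thesis using Suc by simp
  qed simp
  finally show ?thesis .
qed

end

end

section \<open>Bounded solutions of the recurrence\<close>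

\<comment> \<open>A solution that does not vanish identically grows like \<open>((\<bar>K\<bar> - p) / q) ^ n\<close>.\<close>
lemma bounded_recurrence_solution_eq_0:
  fixes d :: "nat \<Rightarrow> complex" and K :: complex and p q :: real
  assumes p: "p > 0" and q: "q > 0" and K: "norm K > p + q" and d0: "d 0 = 0"
    and rec: "\<And>n. K * d (Suc n) = of_real p * d n + of_real q * d (Suc (Suc n))"
    and bounded: "\<And>n. norm (d n) \<le> M"
  shows "d n = 0"
proof -
  define \<theta> where "\<theta> = (norm K - p) / q"
  have \<theta>: "\<theta> > 1" using K q by (simp add: \<theta>_def field_simps)
  have step: "\<theta> * norm (d (Suc n)) \<le> norm (d (Suc (Suc n)))"
    if "norm (d n) \<le> norm (d (Suc n))" for n
  proof -
    have "q * norm (d (Suc (Suc n))) = norm (K * d (Suc n) - of_real p * d n)"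
      using rec[of n] q by (simp add: norm_mult)
    also have "\<dots> \<ge> norm K * norm (d (Suc n)) - p * norm (d n)"
      using norm_triangle_ineq2[of "K * d (Suc n)" "of_real p * d n"] p by (simp add: norm_mult)
    moreover have "p * norm (d n) \<le> p * norm (d (Suc n))"
      using that p by (simp add: mult_left_mono)
    ultimately have "q * norm (d (Suc (Suc n))) \<ge> (norm K - p) * norm (d (Suc n))"
      by (simp add: left_diff_distrib)
    then show ?thesis using q by (simp add: \<theta>_def field_simps)
  qed
  have growth: "norm (d n) \<le> norm (d (Suc n)) \<and> \<theta> ^ n * norm (d 1) \<le> norm (d (Suc n))" for n
  proof (induction n)
    case (Suc n)
    then have "\<theta> * norm (d (Suc n)) \<le> norm (d (Suc (Suc n)))" by (intro step) simp
    moreover have "norm (d (Suc n)) \<le> \<theta> * norm (d (Suc n))"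
      using \<theta> by (simp add: mult_le_cancel_right1)
    moreover have "\<theta> ^ Suc n * norm (d 1) \<le> \<theta> * norm (d (Suc n))"
      using Suc \<theta> by (simp add: mult_left_mono)
    ultimately show ?case by linarith
  qed (simp add: d0)
  have "d 1 = 0"
  proof (rule ccontr)
    assume "d 1 \<noteq> 0"
    obtain n where "M / norm (d 1) < \<theta> ^ n" using real_arch_pow[OF \<theta>] by blast
    then have "M < \<theta> ^ n * norm (d 1)" using \<open>d 1 \<noteq> 0\<close> by (simp add: field_simps)
    then show False using growth[of n] bounded[of "Suc n"] by linarith
  qed
  have "d n = 0 \<and> d (Suc n) = 0" for n
  proof (induction n)
    case (Suc n)
    then show ?case using rec[of n] q by simp
  qed (use d0 \<open>d 1 = 0\<close> in simp)
  then show ?thesis by blast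
qed

lemma multichoose_le_power: "multichoose m k \<le> (m + k) ^ k"
proof (cases m)
  case (Suc m')
  have "(m' + k) choose k \<le> (m' + k) ^ k" by (rule binomial_le_pow) simp
  also have "\<dots> \<le> (m + k) ^ k" using Suc by (intro power_mono) auto
  finally show ?thesis using Suc by (simp add: multichoose_def)
qed (auto simp: multichoose_def)

lemma tendsto_multichoose_power:
  fixes r :: complex
  assumes "norm r < 1"
  shows "(\<lambda>m. of_nat (multichoose m k) * r ^ m) \<longlonglongrightarrow> 0"
proof (rule Lim_null_comparison)
  have "real (multichoose m k) \<le> (real m + real k) ^ k" for m
    using multichoose_le_power[of m k] by (metis of_nat_add of_nat_le_iff of_nat_power)
  then show "\<forall>\<^sub>F m in sequentially. norm (of_nat (multichoose m k) * r ^ m) \<le> (real m + real k) ^ k * norm r ^ m"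
    by (intro always_eventually allI) (simp add: norm_mult norm_power mult_right_mono)
  show "(\<lambda>m. (real m + real k) ^ k * norm r ^ m) \<longlonglongrightarrow> 0"
  proof (cases "r = 0")
    case True
    have "\<forall>\<^sub>F m in sequentially. (real m + real k) ^ k * norm r ^ m = 0"
      using eventually_gt_at_top[of 0] by (rule eventually_mono) (simp add: True)
    then show ?thesis by (rule tendsto_eventually)
  next
    case False
    then show ?thesis using assms by real_asymp
  qed
qed

lemma tendsto_pi_candidate:
  fixes r :: complex
  assumes "norm r < 1"
  shows "(\<lambda>m. pi_candidate f A B r c i m) \<longlonglongrightarrow> 0"
  unfolding pi_candidate_def
  using tendsto_sum[of "{..i}", OF tendsto_mult_right_zero[OF tendsto_multichoose_power[OF assms]]]
  by simp

locale priority_queue_laplace = priority_queue +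
  fixes \<alpha> :: complex
  assumes c_pos: "c \<ge> 1" and Re_\<alpha>_pos: "Re \<alpha> > 0"
begin

abbreviation "\<pi> x \<equiv> piLT l1 l2 m1 m2 c x \<alpha>"
abbreviation "K \<equiv> \<alpha> + of_real (l1 + l2 + real c * m2)"

lemma service_pos: "real c * m2 > 0"
  using c_pos m2_pos by simp

lemma Re_K_gt: "Re K > l2 + real c * m2"
  using Re_\<alpha>_pos l1_pos by simp

lemma r2_eq_small_root: "r2 l1 l2 m2 c \<alpha> = small_root l2 (real c * m2) K"
proof -
  have "phi2 l1 l2 m2 c \<alpha> = (K - csqrt (K\<^sup>2 - of_real (4 * l2 * (real c * m2)))) / of_real (2 * l2)"
    unfolding phi2_def phiBP_def by (simp add: algebra_simps)
  then show ?thesis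
    using l2_pos m2_pos c_pos by (simp add: r2_def rho2_def small_root_def field_simps)
qed

lemma phi2_eq: "phi2 l1 l2 m2 c \<alpha> = of_real (real c * m2 / l2) * r2 l1 l2 m2 c \<alpha>"
  using l2_pos m2_pos c_pos by (simp add: r2_def rho2_def field_simps)

sublocale candidate_balance K "of_real l1" "of_real l2" "of_real (real c * m2)"
    "r2 l1 l2 m2 c \<alpha>" "R1 l1 l2 m2 c \<alpha>" "R2 l1 l2 m2 c \<alpha>"
proof
  define q where "q = real c * m2"
  define r where "r = r2 l1 l2 m2 c \<alpha>"
  define \<phi> where "\<phi> = phi2 l1 l2 m2 c \<alpha>"
  have q: "q > 0" using service_pos by (simp add: q_def)
  note small_root_facts = small_root_eq small_root_nonzero small_root_square_neq
  note small_root =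
    small_root_facts[OF l2_pos q Re_K_gt[folded q_def], folded r2_eq_small_root[folded q_def] r_def]
  have \<phi>: "\<phi> = of_real (q / l2) * r"
    by (simp add: \<phi>_def r_def q_def phi2_eq)
  have R2: "R2 l1 l2 m2 c \<alpha> = r * \<phi>"
    by (simp add: R2_def r_def \<phi>_def)
  have s: "1 - r * \<phi> \<noteq> 0"
    using small_root(3) l2_pos by (auto simp: \<phi> power2_eq_square field_simps)
  have r: "r = of_real (rho2 l2 m2 c) * \<phi>"
    by (simp add: r_def \<phi>_def r2_def)
  have "Omega2 l1 l2 m2 c \<alpha> = r / (of_real l2 * (1 - r * \<phi>))"
    by (simp add: Omega2_def power2_eq_square flip: \<phi>_def mult.assoc r)
  then have R1: "R1 l1 l2 m2 c \<alpha> = of_real l1 * r / (of_real l2 * (1 - r * \<phi>)\<^sup>2)"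
    by (simp add: R1_def power2_eq_square flip: r_def \<phi>_def)
  show "K * r = of_real l2 + of_real q * r\<^sup>2"
    using small_root(1) by (simp add: q_def)
  show "r \<noteq> 0"
    by (fact small_root(2))
  show "of_real q * r = of_real l2 / r * R2 l1 l2 m2 c \<alpha>"
    using small_root(2) l2_pos by (simp add: R2 \<phi> field_simps)
  have "of_real l2 / r - of_real q * r = of_real l2 * (1 - r * \<phi>) / r"
    using small_root(2) l2_pos by (simp add: \<phi> field_simps)
  then show "R1 l1 l2 m2 c \<alpha> * (1 - R2 l1 l2 m2 c \<alpha>) * (of_real l2 / r - of_real q * r) = of_real l1"
    using small_root(2) l2_pos s by (simp add: R1 R2 power2_eq_square)
qed

\<comment> \<open>With \<open>n \<ge> c\<close> all servers are busy with class 2, so class 1 is neither served nor leaves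
  \<open>(i + 1, n)\<close>; only three neighbours feed \<open>(i, n)\<close>.\<close>
lemma piLT_balance_saturated:
  assumes "c \<le> n"
  shows "K * \<pi> (i, n) = (if i = 0 then 0 else of_real l1 * \<pi> (i - 1, n))
           + of_real l2 * \<pi> (i, n - 1) + of_real (real c * m2) * \<pi> (i, Suc n)"
proof -
  obtain n' where n: "n = Suc n'" using assms c_pos by (cases n) auto
  define y where "y = (i, n)"
  define S where "S = {y, (i, n'), (i, Suc n)} \<union> (if i = 0 then {} else {(i - 1, n)})"
  define B where "B = {0..fst y + 1} \<times> {0..snd y + 1}"
  have J_outside: "J x y = 0" if "x \<notin> S" for x
  proof -
    have "rate l1 l2 m1 m2 c x y = 0"
    proof (cases "x = (Suc i, n)")
      case True
      then show ?thesis using assms by (simp add: y_def rate_def)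
    next
      case False
      with that show ?thesis
        unfolding y_def by (intro rate_into_eq_0) (auto simp: S_def y_def n split: if_splits)
    qed
    moreover have "x \<noteq> y" using that by (auto simp: S_def)
    ultimately show ?thesis by (simp add: jump_def)
  qed
  have "(\<Sum>x\<in>B. of_real (J x y) * \<pi> x) = (\<Sum>x\<in>S. of_real (J x y) * \<pi> x)"
    using J_outside by (intro sum.mono_neutral_right) (auto simp: B_def S_def y_def n)
  also have "\<dots> = of_real (J y y) * \<pi> y + of_real (l2 / U) * \<pi> (i, n')
      + of_real (real c * m2 / U) * \<pi> (i, Suc n) + of_real ((if i = 0 then 0 else l1) / U) * \<pi> (i - 1, n)"
    using assms by (cases i) (auto simp: S_def y_def n jump_def rate_def)
  also have "J y y = (U - (l1 + l2 + real c * m2)) / U"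
    using assms unif_pos by (simp add: y_def jump_def outrate_def field_simps)
  finally have sum_eq: "(\<Sum>x\<in>B. of_real (J x y) * \<pi> x) = of_real ((U - (l1 + l2 + real c * m2)) / U) * \<pi> y
      + of_real (l2 / U) * \<pi> (i, n') + of_real (real c * m2 / U) * \<pi> (i, Suc n)
      + of_real ((if i = 0 then 0 else l1) / U) * \<pi> (i - 1, n)" .
  have cancel_U: "of_real U * (of_real (z / U) * w) = of_real z * w" for z and w :: complex
    using unif_pos by (simp add: field_simps)
  have "(\<alpha> + of_real U) * \<pi> y = of_real U * (\<Sum>x\<in>B. of_real (J x y) * \<pi> x)"
    using piLT_balance[OF Re_\<alpha>_pos, of y] by (simp add: B_def y_def n)
  also have "\<dots> = of_real (U - (l1 + l2 + real c * m2)) * \<pi> y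
      + of_real l2 * \<pi> (i, n') + of_real (real c * m2) * \<pi> (i, Suc n)
      + of_real (if i = 0 then 0 else l1) * \<pi> (i - 1, n)"
    unfolding sum_eq distrib_left cancel_U ..
  finally show ?thesis
    by (cases "i = 0") (simp_all add: y_def n algebra_simps)
qed

abbreviation "candidate i m \<equiv>
  pi_candidate (\<lambda>x. \<pi> x) (R1 l1 l2 m2 c \<alpha>) (R2 l1 l2 m2 c \<alpha>) (r2 l1 l2 m2 c \<alpha>) c i m"

lemma norm_r2_less_1: "norm (r2 l1 l2 m2 c \<alpha>) < 1"
  using norm_small_root_less_1[OF l2_pos service_pos Re_K_gt] by (simp add: r2_eq_small_root)

\<comment> \<open>Both sides solve the same second order recurrence in \<open>m\<close>, agree at \<open>m = 0\<close> and are
  bounded; the recurrence has no nonzero bounded solution vanishing at \<open>0\<close>.\<close>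
lemma piLT_eq_candidate_step:
  assumes prev: "\<And>m. 0 < i \<Longrightarrow> \<pi> (i - 1, c - 1 + m) = candidate (i - 1) m"
  shows "\<pi> (i, c - 1 + m) = candidate i m"
proof -
  define d where "d m = \<pi> (i, c - 1 + m) - candidate i m" for m
  have "Bseq (\<lambda>m. candidate i m)"
    using convergent_imp_Bseq[OF convergentI[OF tendsto_pi_candidate[OF norm_r2_less_1]]] .
  then obtain Mc where Mc: "\<And>m. norm (candidate i m) \<le> Mc"
    by (auto simp: Bseq_def)
  have "d m = 0"
  proof (rule bounded_recurrence_solution_eq_0[OF l2_pos service_pos])
    show "norm K > l2 + real c * m2"
      using Re_K_gt complex_Re_le_cmod[of K] by linarith
    show "d 0 = 0"
      by (cases i) (simp_all add: d_def pi_candidate_0)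
    show "K * d (Suc n) = of_real l2 * d n + of_real (real c * m2) * d (Suc (Suc n))" for n
    proof -
      have "c \<le> c - 1 + Suc n" and "c - 1 + Suc n - 1 = c - 1 + n"
        and "Suc (c - 1 + Suc n) = c - 1 + Suc (Suc n)"
        using c_pos by auto
      then have "K * \<pi> (i, c - 1 + Suc n) = (if i = 0 then 0 else of_real l1 * candidate (i - 1) (Suc n))
          + of_real l2 * \<pi> (i, c - 1 + n) + of_real (real c * m2) * \<pi> (i, c - 1 + Suc (Suc n))"
        using piLT_balance_saturated[of "c - 1 + Suc n" i] prev[of "Suc n"] by simp
      then show ?thesis
        using balance_pi_candidate[of "\<lambda>x. \<pi> x" c i n] by (simp add: d_def algebra_simps)
    qed
    show "norm (d n) \<le> 1 / (norm (\<alpha> + of_real U) - U) + Mc" for n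
    proof -
      have "norm (d n) \<le> norm (\<pi> (i, c - 1 + n)) + norm (candidate i n)"
        unfolding d_def by (rule norm_triangle_ineq4)
      then show ?thesis
        using norm_piLT_le[OF Re_\<alpha>_pos, of "(i, c - 1 + n)"] Mc[of n] by linarith
    qed
  qed
  then show ?thesis by (simp add: d_def)
qed

lemma piLT_eq_candidate: "\<pi> (i, c - 1 + m) = candidate i m"
proof (induction i arbitrary: m)
  case 0
  show ?case by (rule piLT_eq_candidate_step) simp
next
  case (Suc i)
  show ?case by (rule piLT_eq_candidate_step) (simp only: diff_Suc_1 Suc.IH)
qed

end

theorem theorem2:
  fixes l1 l2 m1 m2 :: real and c :: nat and \<alpha> :: complex and i j :: nat
  assumes "c \<ge> 1" and "l1 > 0" and "l2 > 0" and "m1 > 0" and "m2 > 0"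
    and "Re \<alpha> > 0" and "j \<ge> 1"
  shows "piLT l1 l2 m1 m2 c (i, c - 1 + j) \<alpha> =
    (\<Sum>k = 0..i. vseq (\<lambda>x. piLT l1 l2 m1 m2 c x \<alpha>) (R1 l1 l2 m2 c \<alpha>) (R2 l1 l2 m2 c \<alpha>) c i k
       * (1 - R2 l1 l2 m2 c \<alpha>) ^ k * of_nat ((j - 1 + k) choose k) * (r2 l1 l2 m2 c \<alpha>) ^ j)"
proof -
  interpret priority_queue_laplace l1 l2 m1 m2 c \<alpha>
    using assms by unfold_locales
  obtain m where j: "j = Suc m" using \<open>j \<ge> 1\<close> by (cases j) auto
  show ?thesis
    unfolding j piLT_eq_candidate pi_candidate_Suc ..
qed

end
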